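(* For every integer $d\ge 1$, the class of finite unit ball graphs in $\mathbb{R}^d$ has asymptotic dimension at most $d$.
   Context: A unit ball graph in $\mathbb{R}^d$ is a graph whose vertices can be mapped to points of $\mathbb{R}^d$ such that two vertices are adjacent if and only if the corresponding points are at Euclidean distance at most $1$. Graphs are metric spaces with the shortest-path distance. For a metric space $(X,d)$, a family $\mathcal U$ of subsets is $D$-bounded if every member has diameter at most $D$, and $r$-disjoint if points in different members are at distance $>r$. A function $D:\mathbb{R}^+\to\mathbb{R}^+$ is an $n$-dimensional control function for $X$ if for every $r>0$ there is a cover $\mathcal U=\mathcal U_1\cup\dots\cup\mathcal U_{n+1}$ of $X$ with each $\mathcal U_i$ $r$-disjoint and each member $D(r)$-bounded; a class has asymptotic dimension at most $n$ if one such function works for all its members. *)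

theory Defs
  imports "HOL-Analysis.Analysis" "HOL-Library.Extended_Nat"
begin

text \<open>A finite (simple) graph is given by a finite vertex set V :: nat set and an
adjacency relation E. Vertices are natural numbers (every finite graph is
isomorphic to one of these).\<close>

definition simple_graph :: "nat set \<Rightarrow> (nat \<Rightarrow> nat \<Rightarrow> bool) \<Rightarrow> bool" where
  "simple_graph V E \<longleftrightarrow> finite V \<and>
     (\<forall>u v. E u v \<longrightarrow> u \<in> V \<and> v \<in> V \<and> u \<noteq> v) \<and> (\<forall>u v. E u v \<longrightarrow> E v u)"

text \<open>Unit ball graph in the Euclidean space real^'n (dimension CARD('n)).
The map p need not be injective.\<close>
definition unit_ball_graph :: "'n::finite itself \<Rightarrow> nat set \<Rightarrow> (nat \<Rightarrow> nat \<Rightarrow> bool) \<Rightarrow> bool" where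
  "unit_ball_graph _ V E \<longleftrightarrow> simple_graph V E \<and>
     (\<exists>p :: nat \<Rightarrow> real ^ 'n. \<forall>u\<in>V. \<forall>v\<in>V. u \<noteq> v \<longrightarrow> (E u v \<longleftrightarrow> dist (p u) (p v) \<le> 1))"

text \<open>Walks given as vertex lists; a walk with k+1 vertices has length k.\<close>
definition is_walk :: "nat set \<Rightarrow> (nat \<Rightarrow> nat \<Rightarrow> bool) \<Rightarrow> nat list \<Rightarrow> nat \<Rightarrow> nat \<Rightarrow> bool" where
  "is_walk V E xs u v \<longleftrightarrow> xs \<noteq> [] \<and> hd xs = u \<and> last xs = v \<and> set xs \<subseteq> V \<and>
     (\<forall>i. Suc i < length xs \<longrightarrow> E (xs ! i) (xs ! Suc i))"

text \<open>Shortest-path distance (infinite between different components).\<close>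
definition gdist :: "nat set \<Rightarrow> (nat \<Rightarrow> nat \<Rightarrow> bool) \<Rightarrow> nat \<Rightarrow> nat \<Rightarrow> enat" where
  "gdist V E u v = (INF xs \<in> {xs. is_walk V E xs u v}. enat (length xs - 1))"

definition dist_le :: "nat set \<Rightarrow> (nat \<Rightarrow> nat \<Rightarrow> bool) \<Rightarrow> nat \<Rightarrow> nat \<Rightarrow> real \<Rightarrow> bool" where
  "dist_le V E u v r \<longleftrightarrow> (\<exists>n. gdist V E u v = enat n \<and> real n \<le> r)"

definition D_bounded :: "nat set \<Rightarrow> (nat \<Rightarrow> nat \<Rightarrow> bool) \<Rightarrow> real \<Rightarrow> nat set set \<Rightarrow> bool" where
  "D_bounded V E D \<U> \<longleftrightarrow> (\<forall>U\<in>\<U>. \<forall>x\<in>U. \<forall>y\<in>U. dist_le V E x y D)"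

definition r_disjoint :: "nat set \<Rightarrow> (nat \<Rightarrow> nat \<Rightarrow> bool) \<Rightarrow> real \<Rightarrow> nat set set \<Rightarrow> bool" where
  "r_disjoint V E r \<U> \<longleftrightarrow>
     (\<forall>U\<in>\<U>. \<forall>U'\<in>\<U>. U \<noteq> U' \<longrightarrow> (\<forall>x\<in>U. \<forall>y\<in>U'. \<not> dist_le V E x y r))"

definition control_function ::
  "nat \<Rightarrow> (real \<Rightarrow> real) \<Rightarrow> nat set \<Rightarrow> (nat \<Rightarrow> nat \<Rightarrow> bool) \<Rightarrow> bool" where
  "control_function n D V E \<longleftrightarrow>
     (\<forall>r>0. \<exists>\<U> :: nat \<Rightarrow> nat set set.
        (\<forall>i\<le>n. \<forall>U\<in>\<U> i. U \<subseteq> V) \<and>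
        (\<Union>i\<le>n. \<Union>(\<U> i)) = V \<and>
        (\<forall>i\<le>n. r_disjoint V E r (\<U> i) \<and> D_bounded V E (D r) (\<U> i)))"

definition asdim_le :: "(nat set \<times> (nat \<Rightarrow> nat \<Rightarrow> bool)) set \<Rightarrow> nat \<Rightarrow> bool" where
  "asdim_le \<C> n \<longleftrightarrow> (\<exists>D :: real \<Rightarrow> real. (\<forall>r>0. D r > 0) \<and>
     (\<forall>(V, E)\<in>\<C>. control_function n D V E))"

end

(* Fix r > 0 and put s = r + 1. For a colour k in {0..d}, cut every coordinate axis at the
   points (k + (d+1) m) s, m integer; a point is k-free if none of its coordinates lies within s/2
   of a cut, and its k-key is the box of the resulting grid containing it. A real number is close
   to the cuts of at most one colour, so by pigeonhole every point of R^d is free for some colour.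
   Free points of one colour with different keys are at Euclidean, hence graph, distance at least
   s > r. Within one key, group the vertices by cells of mesh 1/d, which are cliques, and join two
   cells when they contain r-close vertices: the resulting classes are r-disjoint, and as a box
   meets at most M cells, with M depending only on d and r, a chain of at most M^2 joined cells
   bounds the graph diameter of a class by M^2 (r + 1) + 1. *)

theory Submission
  imports Defs
begin

lemma is_walk_iff:
  "is_walk V E xs u v \<longleftrightarrow>
     xs \<noteq> [] \<and> hd xs = u \<and> last xs = v \<and> set xs \<subseteq> V \<and> successively E xs"
  by (simp add: is_walk_def successively_conv_nth)

lemma is_walk_append:
  assumes "is_walk V E xs u v" "is_walk V E ys v w"
  shows "is_walk V E (xs @ tl ys) u w"
proof (cases "tl ys")
  case Nil
  with assms show ?thesis by (cases ys) (auto simp: is_walk_iff)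
next
  case (Cons z zs)
  with assms(2) have "ys = v # z # zs" by (cases ys) (auto simp: is_walk_iff)
  with assms Cons show ?thesis
    by (auto simp: is_walk_iff successively_append_iff)
qed

lemma is_walk_rev:
  assumes "\<And>a b. E a b \<Longrightarrow> E b a" "is_walk V E xs u v"
  shows "is_walk V E (rev xs) v u"
  using assms by (auto simp: is_walk_iff hd_rev last_rev elim: successively_mono)

lemma dist_le_iff_walk:
  "dist_le V E u v a \<longleftrightarrow> (\<exists>xs. is_walk V E xs u v \<and> real (length xs - 1) \<le> a)"
proof
  assume "dist_le V E u v a"
  then obtain n where n: "gdist V E u v = enat n" "real n \<le> a" by (auto simp: dist_le_def)
  let ?L = "(\<lambda>xs. enat (length xs - 1)) ` {xs. is_walk V E xs u v}"
  have Inf_L: "Inf ?L = enat n" using n(1) by (simp only: gdist_def)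
  have "?L \<noteq> {}"
  proof
    assume "?L = {}"
    with Inf_L show False by (simp add: top_enat_def)
  qed
  then obtain k where "k \<in> ?L" by blast
  then have "Inf ?L \<in> ?L" by (rule wellorder_InfI)
  then obtain xs where "is_walk V E xs u v" "enat (length xs - 1) = enat n"
    unfolding Inf_L by blast
  with n(2) show "\<exists>xs. is_walk V E xs u v \<and> real (length xs - 1) \<le> a" by auto
next
  assume "\<exists>xs. is_walk V E xs u v \<and> real (length xs - 1) \<le> a"
  then obtain xs where xs: "is_walk V E xs u v" "real (length xs - 1) \<le> a" by blast
  then have le: "gdist V E u v \<le> enat (length xs - 1)"
    unfolding gdist_def by (intro INF_lower) simp
  then obtain n where "gdist V E u v = enat n" using enat_ile by blast
  with le xs(2) show "dist_le V E u v a" by (auto simp: dist_le_def)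
qed

lemma dist_le_refl:
  assumes "u \<in> V" "0 \<le> a"
  shows "dist_le V E u u a"
proof -
  have "is_walk V E [u] u u" using assms(1) by (simp add: is_walk_iff)
  with assms(2) show ?thesis unfolding dist_le_iff_walk by (intro exI[of _ "[u]"]) simp
qed

lemma dist_le_edge:
  assumes "u \<in> V" "v \<in> V" "E u v"
  shows "dist_le V E u v 1"
proof -
  have "is_walk V E [u, v] u v" using assms by (simp add: is_walk_iff)
  then show ?thesis unfolding dist_le_iff_walk by (intro exI[of _ "[u, v]"]) simp
qed

lemma dist_le_mono: "dist_le V E u v a \<Longrightarrow> a \<le> b \<Longrightarrow> dist_le V E u v b"
  by (auto simp: dist_le_def)

lemma dist_le_trans:
  assumes "dist_le V E u v a" "dist_le V E v w b"
  shows "dist_le V E u w (a + b)"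
proof -
  obtain xs ys where xs: "is_walk V E xs u v" "real (length xs - 1) \<le> a"
    and ys: "is_walk V E ys v w" "real (length ys - 1) \<le> b"
    using assms by (auto simp: dist_le_iff_walk)
  have "xs \<noteq> []" "ys \<noteq> []" using xs ys by (auto simp: is_walk_iff)
  then have "real (length (xs @ tl ys) - 1) \<le> a + b" using xs(2) ys(2) by (cases xs) auto
  with is_walk_append[OF xs(1) ys(1)] show ?thesis unfolding dist_le_iff_walk by blast
qed

lemma dist_le_sym:
  assumes "\<And>a b. E a b \<Longrightarrow> E b a" "dist_le V E u v a"
  shows "dist_le V E v u a"
proof -
  obtain xs where "is_walk V E xs u v" "real (length xs - 1) \<le> a"
    using assms(2) unfolding dist_le_iff_walk by blast
  with is_walk_rev[OF assms(1)] show ?thesis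
    unfolding dist_le_iff_walk by (intro exI[of _ "rev xs"]) simp
qed

lemma dist_le_imp_dist_image_le:
  fixes p :: "nat \<Rightarrow> 'a::metric_space"
  assumes edge: "\<And>u v. u \<in> V \<Longrightarrow> v \<in> V \<Longrightarrow> E u v \<Longrightarrow> dist (p u) (p v) \<le> 1"
    and "dist_le V E u v a"
  shows "dist (p u) (p v) \<le> a"
proof -
  have "dist (p u) (p v) \<le> real (length xs - 1)" if "is_walk V E xs u v" for xs
    using that
  proof (induction xs arbitrary: u)
    case (Cons x ys)
    show ?case
    proof (cases ys)
      case (Cons y zs)
      with Cons.prems have "E u y" "u \<in> V" "y \<in> V" and ys: "is_walk V E ys y v"
        by (auto simp: is_walk_iff)
      then have "dist (p u) (p y) \<le> 1" using edge by blast
      moreover have "dist (p y) (p v) \<le> real (length ys - 1)" by (rule Cons.IH[OF ys])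
      ultimately have "dist (p u) (p v) \<le> 1 + real (length ys - 1)"
        using dist_triangle[of "p u" "p v" "p y"] by linarith
      then show ?thesis using \<open>ys = y # zs\<close> by simp
    qed (use Cons.prems in \<open>auto simp: is_walk_iff\<close>)
  qed (simp add: is_walk_iff)
  then show ?thesis using assms(2) unfolding dist_le_iff_walk by (meson order_trans)
qed

definition off_grid :: "real \<Rightarrow> real \<Rightarrow> real \<Rightarrow> bool" where
  "off_grid P c t \<longleftrightarrow> (\<forall>m::int. 1/2 \<le> \<bar>t - (c + P * of_int m)\<bar>)"

definition grid_index :: "real \<Rightarrow> real \<Rightarrow> real \<Rightarrow> int" where
  "grid_index P c t = \<lfloor>(t - c) / P\<rfloor>"

lemma off_grid_index_less_imp_diff_ge:
  assumes "0 < P" "off_grid P c a" "off_grid P c b" "grid_index P c a < grid_index P c b"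
  shows "1 \<le> b - a"
proof -
  define g where "g = c + P * of_int (grid_index P c b)"
  have "of_int (grid_index P c b) \<le> (b - c) / P" by (simp add: grid_index_def)
  then have "g \<le> b" using assms(1) by (simp add: g_def field_simps)
  moreover have "(a - c) / P < of_int (grid_index P c b)"
    using assms(4) by (simp add: grid_index_def floor_less_iff)
  then have "a < g" using assms(1) by (simp add: g_def field_simps)
  moreover have "1/2 \<le> \<bar>a - g\<bar>" "1/2 \<le> \<bar>b - g\<bar>"
    using assms(2,3) by (simp_all add: off_grid_def g_def)
  ultimately show ?thesis by (simp add: abs_if split: if_splits)
qed

lemma off_grid_index_neq_imp_abs_diff_ge:
  assumes "0 < P" "off_grid P c a" "off_grid P c b" "grid_index P c a \<noteq> grid_index P c b"
  shows "1 \<le> \<bar>a - b\<bar>"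
  using assms off_grid_index_less_imp_diff_ge[of P c a b] off_grid_index_less_imp_diff_ge[of P c b a]
  by (cases "grid_index P c a < grid_index P c b") (simp_all add: abs_if)

lemma grid_index_eq_imp_abs_diff_less:
  assumes "0 < P" "grid_index P c a = grid_index P c b"
  shows "\<bar>a - b\<bar> < P"
proof -
  have bounds: "P * of_int (grid_index P c t) \<le> t - c" "t - c < P * of_int (grid_index P c t) + P"
    for t
  proof -
    have "of_int \<lfloor>(t - c) / P\<rfloor> * P \<le> t - c"
      using of_int_floor_le[of "(t - c) / P"] assms(1) by (simp only: pos_le_divide_eq)
    moreover have "t - c < (of_int \<lfloor>(t - c) / P\<rfloor> + 1) * P"
      using real_of_int_floor_add_one_gt[of "(t - c) / P"] assms(1) by (simp only: pos_divide_less_eq)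
    ultimately show "P * of_int (grid_index P c t) \<le> t - c" "t - c < P * of_int (grid_index P c t) + P"
      unfolding grid_index_def by (simp_all add: algebra_simps)
  qed
  show ?thesis
    using bounds[of a] bounds[of b] unfolding assms(2) abs_less_iff by linarith
qed

lemma not_off_grid_unique:
  assumes "k \<le> d" "k' \<le> d"
    and "\<not> off_grid (real d + 1) (real k) t" "\<not> off_grid (real d + 1) (real k') t"
  shows "k = k'"
proof -
  obtain m m' :: int where "\<bar>t - (real k + (real d + 1) * of_int m)\<bar> < 1/2"
    and "\<bar>t - (real k' + (real d + 1) * of_int m')\<bar> < 1/2"
    using assms(3,4) by (auto simp: off_grid_def not_le)
  then have "\<bar>real k + (real d + 1) * of_int m - (real k' + (real d + 1) * of_int m')\<bar> < 1"
    by (simp only: abs_less_iff) linarith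
  then have "\<bar>of_int (int k + (int d + 1) * m - int k' - (int d + 1) * m') :: real\<bar> < 1"
    by (simp add: algebra_simps)
  then have eq: "int k - int k' = (int d + 1) * (m' - m)"
    by (simp only: of_int_abs[symmetric] of_int_less_1_iff) (simp add: algebra_simps)
  have "m' = m"
  proof (rule ccontr)
    assume "m' \<noteq> m"
    then have "int d + 1 \<le> \<bar>(int d + 1) * (m' - m)\<bar>" by (simp add: abs_mult)
    with eq assms(1,2) show False by linarith
  qed
  with eq show ?thesis by simp
qed

definition colour_free :: "real \<Rightarrow> nat \<Rightarrow> real ^ 'n::finite \<Rightarrow> bool" where
  "colour_free s k x \<longleftrightarrow> (\<forall>j. off_grid (real CARD('n) + 1) (real k) (x $ j / s))"

definition colour_key :: "real \<Rightarrow> nat \<Rightarrow> real ^ 'n::finite \<Rightarrow> 'n \<Rightarrow> int" where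
  "colour_key s k x j = grid_index (real CARD('n) + 1) (real k) (x $ j / s)"

lemma exists_colour_free:
  fixes x :: "real ^ 'n::finite"
  shows "\<exists>k\<le>CARD('n). colour_free s k x"
proof (rule ccontr)
  let ?d = "CARD('n)"
  assume "\<not> ?thesis"
  then have "\<forall>k\<in>{..?d}. \<exists>j. \<not> off_grid (real ?d + 1) (real k) (x $ j / s)"
    by (auto simp: colour_free_def)
  then obtain f where f: "\<And>k. k \<in> {..?d} \<Longrightarrow> \<not> off_grid (real ?d + 1) (real k) (x $ f k / s)"
    by metis
  have "inj_on f {..?d}"
    by (rule inj_onI) (use f not_off_grid_unique in \<open>metis atMost_iff\<close>)
  then have "card {..?d} \<le> card (UNIV :: 'n set)" by (rule card_inj_on_le) auto
  then show False by simp
qed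

lemma colour_key_neq_imp_dist_ge:
  fixes x y :: "real ^ 'n::finite"
  assumes "0 < s" "colour_free s k x" "colour_free s k y" "colour_key s k x \<noteq> colour_key s k y"
  shows "s \<le> dist x y"
proof -
  obtain j where j: "colour_key s k x j \<noteq> colour_key s k y j" using assms(4) by blast
  have "1 \<le> \<bar>x $ j / s - y $ j / s\<bar>"
    using assms(2,3) j unfolding colour_free_def colour_key_def
    by (intro off_grid_index_neq_imp_abs_diff_ge) auto
  also have "\<bar>x $ j / s - y $ j / s\<bar> = \<bar>(x - y) $ j\<bar> / s"
    using assms(1) by (simp only: diff_divide_distrib[symmetric] abs_divide abs_of_pos vector_minus_component)
  finally have "s \<le> \<bar>(x - y) $ j\<bar>" using assms(1) by (simp only: le_divide_eq_1_pos)
  also have "\<dots> \<le> dist x y" unfolding dist_norm by (rule component_le_norm_cart)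
  finally show ?thesis .
qed

lemma colour_key_eq_imp_abs_diff_le:
  fixes x y :: "real ^ 'n::finite"
  assumes "0 < s" "colour_key s k x = colour_key s k y"
  shows "\<bar>x $ j - y $ j\<bar> \<le> (real CARD('n) + 1) * s"
proof -
  have "\<bar>x $ j / s - y $ j / s\<bar> < real CARD('n) + 1"
    using assms(2) unfolding colour_key_def
    by (intro grid_index_eq_imp_abs_diff_less) (auto dest: fun_cong[of _ _ j])
  also have "\<bar>x $ j / s - y $ j / s\<bar> = \<bar>x $ j - y $ j\<bar> / s"
    using assms(1) by (simp only: diff_divide_distrib[symmetric] abs_divide abs_of_pos)
  finally show ?thesis using assms(1) by (simp only: pos_divide_less_eq less_imp_le)
qed

definition mesh_cell :: "real \<Rightarrow> real ^ 'n::finite \<Rightarrow> 'n \<Rightarrow> int" where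
  "mesh_cell \<epsilon> x j = \<lfloor>x $ j / \<epsilon>\<rfloor>"

lemma mesh_cell_eq_imp_dist_less:
  fixes x y :: "real ^ 'n::finite"
  assumes "0 < \<epsilon>" "mesh_cell \<epsilon> x = mesh_cell \<epsilon> y"
  shows "dist x y < real CARD('n) * \<epsilon>"
proof -
  have "\<bar>(x - y) $ j\<bar> < \<epsilon>" for j
  proof -
    have "grid_index \<epsilon> 0 (x $ j) = grid_index \<epsilon> 0 (y $ j)"
      using fun_cong[OF assms(2), of j] by (simp only: grid_index_def mesh_cell_def diff_zero)
    then show ?thesis by (simp only: grid_index_eq_imp_abs_diff_less[OF assms(1)] vector_minus_component)
  qed
  then have "(\<Sum>j\<in>UNIV. \<bar>(x - y) $ j\<bar>) < (\<Sum>j\<in>(UNIV :: 'n set). \<epsilon>)"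
    by (intro sum_strict_mono) auto
  moreover have "dist x y \<le> (\<Sum>j\<in>UNIV. \<bar>(x - y) $ j\<bar>)"
    unfolding dist_norm by (rule norm_le_l1_cart)
  ultimately show ?thesis by simp
qed

lemma card_mesh_cell_image_le:
  fixes S :: "(real ^ 'n::finite) set"
  assumes "0 < \<epsilon>" "0 \<le> L" and near: "\<And>x j. x \<in> S \<Longrightarrow> \<bar>x $ j - x0 $ j\<bar> \<le> L"
  shows "card (mesh_cell \<epsilon> ` S) \<le> (nat \<lceil>2 * L / \<epsilon>\<rceil> + 1) ^ CARD('n)"
proof -
  define K where "K = \<lceil>2 * L / \<epsilon>\<rceil>"
  define lo where "lo j = \<lfloor>(x0 $ j - L) / \<epsilon>\<rfloor>" for j
  have "0 \<le> 2 * L / \<epsilon>" using assms(1,2) by simp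
  then have "0 \<le> K" by (simp add: K_def)
  have "mesh_cell \<epsilon> x j \<in> {lo j .. lo j + K}" if "x \<in> S" for x j
  proof -
    have x: "x0 $ j - L \<le> x $ j" "x $ j \<le> (x0 $ j - L) + 2 * L" using near[OF that, of j] by auto
    have "lo j \<le> mesh_cell \<epsilon> x j"
      unfolding lo_def mesh_cell_def using x(1) assms(1) by (intro floor_mono divide_right_mono) auto
    moreover have "x $ j / \<epsilon> \<le> ((x0 $ j - L) + 2 * L) / \<epsilon>"
      using x(2) assms(1) by (intro divide_right_mono) auto
    then have "x $ j / \<epsilon> < of_int (lo j) + 1 + of_int K"
      using real_of_int_floor_add_one_gt[of "(x0 $ j - L) / \<epsilon>"] le_of_int_ceiling[of "2 * L / \<epsilon>"]
      unfolding lo_def K_def add_divide_distrib by linarith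
    then have "mesh_cell \<epsilon> x j \<le> lo j + K"
      unfolding mesh_cell_def floor_le_iff of_int_add by linarith
    ultimately show ?thesis by simp
  qed
  then have "mesh_cell \<epsilon> ` S \<subseteq> PiE UNIV (\<lambda>j. {lo j .. lo j + K})" by auto
  then have "card (mesh_cell \<epsilon> ` S) \<le> card (PiE UNIV (\<lambda>j. {lo j .. lo j + K}))"
    by (intro card_mono finite_PiE) auto
  also have "\<dots> = (nat K + 1) ^ CARD('n)"
    using \<open>0 \<le> K\<close> by (simp add: card_PiE nat_add_distrib)
  finally show ?thesis by (simp add: K_def)
qed

lemma cell_chain_dist_le:
  fixes cl :: "nat \<Rightarrow> 'c"
  assumes same_cell: "\<And>x y. x \<in> B \<Longrightarrow> y \<in> B \<Longrightarrow> cl x = cl y \<Longrightarrow> dist_le V E x y 1"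
    and R: "R = {(cl u, cl v) | u v. u \<in> B \<and> v \<in> B \<and> dist_le V E u v r}"
  shows "(cl x, cl y) \<in> R ^^ n \<Longrightarrow> x \<in> B \<Longrightarrow> y \<in> B \<Longrightarrow> dist_le V E x y (real n * (r + 1) + 1)"
proof (induction n arbitrary: y)
  case 0
  then show ?case using same_cell by simp
next
  case (Suc n)
  from Suc.prems(1) obtain c where c: "(cl x, c) \<in> R ^^ n" "(c, cl y) \<in> R" by (rule relpow_Suc_E)
  from c(2) obtain u v where uv: "u \<in> B" "v \<in> B" "dist_le V E u v r" "c = cl u" "cl v = cl y"
    unfolding R by auto
  have "dist_le V E x u (real n * (r + 1) + 1)" using Suc.IH[OF _ Suc.prems(2) uv(1)] c(1) uv(4) by simp
  moreover have "dist_le V E v y 1" by (rule same_cell[OF uv(2) Suc.prems(3) uv(5)])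
  ultimately have "dist_le V E x y (real n * (r + 1) + 1 + r + 1)"
    by (rule dist_le_trans[OF dist_le_trans[OF _ uv(3)]])
  then show ?case by (simp add: algebra_simps)
qed

lemma exists_cell_clusters:
  fixes cl :: "nat \<Rightarrow> 'c"
  assumes sym: "\<And>a b. E a b \<Longrightarrow> E b a" and "finite B" "0 \<le> r" "card (cl ` B) \<le> M"
    and same_cell: "\<And>x y. x \<in> B \<Longrightarrow> y \<in> B \<Longrightarrow> cl x = cl y \<Longrightarrow> dist_le V E x y 1"
  shows "\<exists>\<U>. \<Union>\<U> = B \<and> r_disjoint V E r \<U> \<and> D_bounded V E (real (M\<^sup>2) * (r + 1) + 1) \<U>"
proof -
  define R where "R = {(cl u, cl v) | u v. u \<in> B \<and> v \<in> B \<and> dist_le V E u v r}"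
  define \<rho> where "\<rho> = {(x, y) \<in> B \<times> B. (cl x, cl y) \<in> R\<^sup>*}"
  have "sym R" unfolding R_def sym_def using dist_le_sym[of E, OF sym] by blast
  then have "sym (R\<^sup>*)" by (rule sym_rtrancl)
  have "equiv B \<rho>"
  proof (rule equivI)
    show "\<rho> \<subseteq> B \<times> B" "refl_on B \<rho>" by (auto simp: \<rho>_def refl_on_def)
    show "sym \<rho>" using \<open>sym (R\<^sup>*)\<close> by (auto simp: \<rho>_def sym_def)
    show "trans \<rho>" unfolding \<rho>_def trans_def by (auto intro: rtrancl_trans[of _ "cl _"])
  qed
  have R_sub: "R \<subseteq> cl ` B \<times> cl ` B" by (auto simp: R_def)
  then have "finite R" using \<open>finite B\<close> by (blast intro: finite_subset finite_cartesian_product finite_imageI)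
  have "card R \<le> M\<^sup>2"
  proof -
    have "card R \<le> card (cl ` B \<times> cl ` B)" using R_sub \<open>finite B\<close> by (intro card_mono) auto
    also have "\<dots> = card (cl ` B) ^ 2" by (simp add: card_cartesian_product power2_eq_square)
    also have "\<dots> \<le> M\<^sup>2" using assms(4) by (rule power_mono) simp
    finally show ?thesis .
  qed
  have "r_disjoint V E r (B // \<rho>)"
    unfolding r_disjoint_def
  proof (intro ballI impI notI)
    fix X Y x y assume XY: "X \<in> B // \<rho>" "Y \<in> B // \<rho>" "X \<noteq> Y" "x \<in> X" "y \<in> Y" "dist_le V E x y r"
    then have "x \<in> B" "y \<in> B" using Union_quotient[OF \<open>equiv B \<rho>\<close>] by blast+
    with XY(6) have "(cl x, cl y) \<in> R" unfolding R_def by blast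
    with \<open>x \<in> B\<close> \<open>y \<in> B\<close> have "(x, y) \<in> \<rho>" unfolding \<rho>_def by blast
    with quotient_eq_iff[OF \<open>equiv B \<rho>\<close> XY(1,2,4,5)] XY(3) show False by simp
  qed
  moreover have "D_bounded V E (real (M\<^sup>2) * (r + 1) + 1) (B // \<rho>)"
    unfolding D_bounded_def
  proof (intro ballI)
    fix X x y assume "X \<in> B // \<rho>" "x \<in> X" "y \<in> X"
    then have "(x, y) \<in> \<rho>" using in_quotient_imp_in_rel[OF \<open>equiv B \<rho>\<close>] by blast
    then obtain n where n: "n \<le> card R" "(cl x, cl y) \<in> R ^^ n" "x \<in> B" "y \<in> B"
      unfolding \<rho>_def rtrancl_finite_eq_relpow[OF \<open>finite R\<close>] by blast
    then have "dist_le V E x y (real n * (r + 1) + 1)"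
      using cell_chain_dist_le[OF same_cell R_def] by blast
    moreover have "real n * (r + 1) + 1 \<le> real (M\<^sup>2) * (r + 1) + 1"
      using n(1) \<open>card R \<le> M\<^sup>2\<close> \<open>0 \<le> r\<close> by (intro add_right_mono mult_right_mono) auto
    ultimately show "dist_le V E x y (real (M\<^sup>2) * (r + 1) + 1)" by (rule dist_le_mono)
  qed
  ultimately show ?thesis using Union_quotient[OF \<open>equiv B \<rho>\<close>] by (intro exI[of _ "B // \<rho>"]) simp
qed

lemma r_disjoint_UN:
  assumes "\<And>\<kappa>. r_disjoint V E r (C \<kappa>)" "\<And>\<kappa>. \<Union>(C \<kappa>) \<subseteq> B \<kappa>"
    and separated: "\<And>\<kappa> \<kappa>' x y. \<kappa> \<noteq> \<kappa>' \<Longrightarrow> x \<in> B \<kappa> \<Longrightarrow> y \<in> B \<kappa>' \<Longrightarrow> \<not> dist_le V E x y r"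
  shows "r_disjoint V E r (\<Union>\<kappa>. C \<kappa>)"
  unfolding r_disjoint_def
proof (intro ballI impI)
  fix U U' x y assume "U \<in> (\<Union>\<kappa>. C \<kappa>)" "U' \<in> (\<Union>\<kappa>. C \<kappa>)" "U \<noteq> U'" "x \<in> U" "y \<in> U'"
  then obtain \<kappa> \<kappa>' where U: "U \<in> C \<kappa>" "U' \<in> C \<kappa>'" by blast
  show "\<not> dist_le V E x y r"
  proof (cases "\<kappa> = \<kappa>'")
    case True
    with assms(1)[of \<kappa>] U \<open>U \<noteq> U'\<close> \<open>x \<in> U\<close> \<open>y \<in> U'\<close> show ?thesis
      unfolding r_disjoint_def by blast
  next
    case False
    have "x \<in> B \<kappa>" "y \<in> B \<kappa>'" using assms(2) U \<open>x \<in> U\<close> \<open>y \<in> U'\<close> by blast+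
    with separated[OF False] show ?thesis .
  qed
qed

lemma exists_cover_from_blocks:
  assumes "\<And>k \<kappa>. k \<le> n \<Longrightarrow> B k \<kappa> \<subseteq> V"
    and "\<And>v. v \<in> V \<Longrightarrow> \<exists>k\<le>n. \<exists>\<kappa>. v \<in> B k \<kappa>"
    and separated: "\<And>k \<kappa> \<kappa>' x y. k \<le> n \<Longrightarrow> \<kappa> \<noteq> \<kappa>' \<Longrightarrow> x \<in> B k \<kappa> \<Longrightarrow> y \<in> B k \<kappa>'
      \<Longrightarrow> \<not> dist_le V E x y r"
    and "\<And>k \<kappa>. k \<le> n \<Longrightarrow> \<exists>\<U>. \<Union>\<U> = B k \<kappa> \<and> r_disjoint V E r \<U> \<and> D_bounded V E D \<U>"
  shows "\<exists>\<U> :: nat \<Rightarrow> nat set set. (\<forall>i\<le>n. \<forall>U\<in>\<U> i. U \<subseteq> V) \<and> (\<Union>i\<le>n. \<Union>(\<U> i)) = V \<and>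
    (\<forall>i\<le>n. r_disjoint V E r (\<U> i) \<and> D_bounded V E D (\<U> i))"
proof -
  define C where "C k \<kappa> = (SOME \<U>. \<Union>\<U> = B k \<kappa> \<and> r_disjoint V E r \<U> \<and> D_bounded V E D \<U>)"
    for k \<kappa>
  have C: "\<Union>(C k \<kappa>) = B k \<kappa>" "r_disjoint V E r (C k \<kappa>)" "D_bounded V E D (C k \<kappa>)"
    if "k \<le> n" for k \<kappa>
    using someI_ex[OF assms(4)[OF that, of \<kappa>]] unfolding C_def by blast+
  have disjoint: "r_disjoint V E r (\<Union>\<kappa>. C k \<kappa>)" if "k \<le> n" for k
    using C(1,2)[OF that] separated[OF that] by (intro r_disjoint_UN) auto
  have bounded: "D_bounded V E D (\<Union>\<kappa>. C k \<kappa>)" if "k \<le> n" for k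
    using C(3)[OF that] unfolding D_bounded_def by blast
  have subset: "U \<subseteq> V" if "k \<le> n" "U \<in> (\<Union>\<kappa>. C k \<kappa>)" for k U
    using that C(1) assms(1) by blast
  have cover: "(\<Union>k\<le>n. \<Union>(\<Union>\<kappa>. C k \<kappa>)) = V"
  proof (intro equalityI subsetI)
    fix v assume "v \<in> (\<Union>k\<le>n. \<Union>(\<Union>\<kappa>. C k \<kappa>))"
    then obtain k U where "k \<le> n" "U \<in> (\<Union>\<kappa>. C k \<kappa>)" "v \<in> U" by blast
    with subset show "v \<in> V" by blast
  next
    fix v assume "v \<in> V"
    then obtain k \<kappa> where "k \<le> n" "v \<in> B k \<kappa>" using assms(2) by blast
    moreover from this obtain U where "U \<in> C k \<kappa>" "v \<in> U" using C(1)[of k \<kappa>] by blast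
    ultimately show "v \<in> (\<Union>k\<le>n. \<Union>(\<Union>\<kappa>. C k \<kappa>))" by blast
  qed
  show ?thesis
  proof (intro exI[of _ "\<lambda>k. \<Union>\<kappa>. C k \<kappa>"] conjI allI impI ballI)
    show "U \<subseteq> V" if "k \<le> n" "U \<in> (\<Union>\<kappa>. C k \<kappa>)" for k U using subset[OF that] .
  qed (use cover disjoint bounded in simp_all)
qed

lemma card_mesh_cell_image_le_if_colour_key_eq:
  fixes S :: "(real ^ 'n::finite) set"
  assumes "0 < s" "0 < \<epsilon>" and same_key: "\<And>x y. x \<in> S \<Longrightarrow> y \<in> S \<Longrightarrow> colour_key s k x = colour_key s k y"
  shows "card (mesh_cell \<epsilon> ` S) \<le> (nat \<lceil>2 * ((real CARD('n) + 1) * s) / \<epsilon>\<rceil> + 1) ^ CARD('n)"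
proof (cases "S = {}")
  case False
  then obtain x0 where "x0 \<in> S" by blast
  have "0 \<le> (real CARD('n) + 1) * s" using assms(1) by simp
  moreover have "\<bar>x $ j - x0 $ j\<bar> \<le> (real CARD('n) + 1) * s" if "x \<in> S" for x j
    using colour_key_eq_imp_abs_diff_le[OF assms(1) same_key[OF that \<open>x0 \<in> S\<close>]] .
  ultimately show ?thesis by (rule card_mesh_cell_image_le[OF assms(2)])
qed simp

lemma unit_ball_graph_dist_le_one:
  fixes p :: "nat \<Rightarrow> 'a::metric_space"
  assumes "\<forall>u\<in>V. \<forall>v\<in>V. u \<noteq> v \<longrightarrow> (E u v \<longleftrightarrow> dist (p u) (p v) \<le> 1)"
    and "u \<in> V" "v \<in> V" "dist (p u) (p v) \<le> 1"
  shows "dist_le V E u v 1"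
proof (cases "u = v")
  case True
  with assms(2) show ?thesis by (simp add: dist_le_refl)
next
  case False
  with assms have "E u v" by blast
  with assms(2,3) show ?thesis by (rule dist_le_edge)
qed

(* The d-th power bounds the number of cells of mesh 1/d met by a colour block, whose points
   differ by at most (d+1)(r+1) in every coordinate. *)
definition unit_ball_control :: "nat \<Rightarrow> real \<Rightarrow> real" where
  "unit_ball_control d r =
     real (((nat \<lceil>2 * real d * (real d + 1) * (r + 1)\<rceil> + 1) ^ d)\<^sup>2) * (r + 1) + 1"

lemma exists_clusters_if_colour_key_eq:
  fixes p :: "nat \<Rightarrow> real ^ 'n::finite"
  assumes sym: "\<And>a b. E a b \<Longrightarrow> E b a"
    and pe: "\<forall>u\<in>V. \<forall>v\<in>V. u \<noteq> v \<longrightarrow> (E u v \<longleftrightarrow> dist (p u) (p v) \<le> 1)"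
    and "finite B" "B \<subseteq> V" "0 < r"
    and same_key: "\<And>x y. x \<in> B \<Longrightarrow> y \<in> B \<Longrightarrow> colour_key (r + 1) k (p x) = colour_key (r + 1) k (p y)"
  shows "\<exists>\<U>. \<Union>\<U> = B \<and> r_disjoint V E r \<U> \<and> D_bounded V E (unit_ball_control CARD('n) r) \<U>"
proof -
  let ?d = "CARD('n)"
  define \<epsilon> where "\<epsilon> = 1 / real ?d"
  have "0 < r + 1" "0 < \<epsilon>" using \<open>0 < r\<close> by (simp_all add: \<epsilon>_def)
  have "card (mesh_cell \<epsilon> ` p ` B) \<le> (nat \<lceil>2 * ((real ?d + 1) * (r + 1)) / \<epsilon>\<rceil> + 1) ^ ?d"
    by (rule card_mesh_cell_image_le_if_colour_key_eq[OF \<open>0 < r + 1\<close> \<open>0 < \<epsilon>\<close>])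
      (use same_key in blast)
  moreover have "2 * ((real ?d + 1) * (r + 1)) / \<epsilon> = 2 * real ?d * (real ?d + 1) * (r + 1)"
    unfolding \<epsilon>_def divide_divide_eq_right div_by_1 by (simp only: ac_simps)
  ultimately have "card ((mesh_cell \<epsilon> \<circ> p) ` B) \<le> (nat \<lceil>2 * real ?d * (real ?d + 1) * (r + 1)\<rceil> + 1) ^ ?d"
    by (simp add: image_comp)
  moreover have "dist_le V E x y 1"
    if "x \<in> B" "y \<in> B" "(mesh_cell \<epsilon> \<circ> p) x = (mesh_cell \<epsilon> \<circ> p) y" for x y
  proof -
    have "dist (p x) (p y) < real ?d * \<epsilon>"
      using that(3) by (intro mesh_cell_eq_imp_dist_less[OF \<open>0 < \<epsilon>\<close>]) simp
    then have "dist (p x) (p y) \<le> 1" by (simp add: \<epsilon>_def)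
    with that(1,2) \<open>B \<subseteq> V\<close> show ?thesis by (intro unit_ball_graph_dist_le_one[OF pe]) auto
  qed
  moreover have "0 \<le> r" using \<open>0 < r\<close> by simp
  ultimately show ?thesis
    unfolding unit_ball_control_def by (intro exists_cell_clusters[OF sym \<open>finite B\<close>])
qed

lemma unit_ball_graph_control_function:
  fixes p :: "nat \<Rightarrow> real ^ 'n::finite"
  assumes sg: "simple_graph V E"
    and pe: "\<forall>u\<in>V. \<forall>v\<in>V. u \<noteq> v \<longrightarrow> (E u v \<longleftrightarrow> dist (p u) (p v) \<le> 1)"
  shows "control_function CARD('n) (unit_ball_control CARD('n)) V E"
  unfolding control_function_def
proof (intro allI impI)
  fix r :: real assume "0 < r"
  define B where "B k \<kappa> = {v \<in> V. colour_free (r + 1) k (p v) \<and> colour_key (r + 1) k (p v) = \<kappa>}"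
    for k \<kappa>
  have sym: "\<And>a b. E a b \<Longrightarrow> E b a" and "finite V" using sg unfolding simple_graph_def by blast+
  have edge: "\<And>u v. u \<in> V \<Longrightarrow> v \<in> V \<Longrightarrow> E u v \<Longrightarrow> dist (p u) (p v) \<le> 1"
    using sg pe unfolding simple_graph_def by blast
  show "\<exists>\<U>. (\<forall>i\<le>CARD('n). \<forall>U\<in>\<U> i. U \<subseteq> V) \<and> (\<Union>i\<le>CARD('n). \<Union>(\<U> i)) = V \<and>
    (\<forall>i\<le>CARD('n). r_disjoint V E r (\<U> i) \<and> D_bounded V E (unit_ball_control CARD('n) r) (\<U> i))"
  proof (rule exists_cover_from_blocks[where B = B])
    show "B k \<kappa> \<subseteq> V" for k \<kappa> by (auto simp: B_def)
  next
    fix v assume "v \<in> V"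
    moreover obtain k where "k \<le> CARD('n)" "colour_free (r + 1) k (p v)"
      using exists_colour_free by blast
    ultimately have "v \<in> B k (colour_key (r + 1) k (p v))" by (simp add: B_def)
    with \<open>k \<le> CARD('n)\<close> show "\<exists>k\<le>CARD('n). \<exists>\<kappa>. v \<in> B k \<kappa>" by blast
  next
    fix k \<kappa> \<kappa>' x y assume "\<kappa> \<noteq> \<kappa>'" "x \<in> B k \<kappa>" "y \<in> B k \<kappa>'"
    then have "r + 1 \<le> dist (p x) (p y)"
      unfolding B_def using \<open>0 < r\<close> by (intro colour_key_neq_imp_dist_ge) auto
    then show "\<not> dist_le V E x y r"
      using dist_le_imp_dist_image_le[of V E p x y r, OF edge] by auto
  next
    fix k \<kappa>
    have "finite (B k \<kappa>)" "B k \<kappa> \<subseteq> V" using \<open>finite V\<close> by (auto simp: B_def)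
    then show "\<exists>\<U>. \<Union>\<U> = B k \<kappa> \<and> r_disjoint V E r \<U> \<and> D_bounded V E (unit_ball_control CARD('n) r) \<U>"
      using \<open>0 < r\<close> by (intro exists_clusters_if_colour_key_eq[OF sym pe, where k = k]) (auto simp: B_def)
  qed
qed

theorem theorem6p3:
  shows "asdim_le {(V, E). unit_ball_graph TYPE('n::finite) V E} CARD('n)"
  unfolding asdim_le_def
proof (intro exI[of _ "unit_ball_control CARD('n)"] conjI allI impI ballI)
  show "0 < unit_ball_control CARD('n) r" if "0 < r" for r
    using that by (simp add: unit_ball_control_def add_nonneg_pos)
next
  fix G assume "G \<in> {(V, E). unit_ball_graph TYPE('n) V E}"
  then obtain V E and p :: "nat \<Rightarrow> real ^ 'n" where "G = (V, E)" "simple_graph V E"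
    and "\<forall>u\<in>V. \<forall>v\<in>V. u \<noteq> v \<longrightarrow> (E u v \<longleftrightarrow> dist (p u) (p v) \<le> 1)"
    unfolding unit_ball_graph_def by blast
  then show "case G of (V, E) \<Rightarrow> control_function CARD('n) (unit_ball_control CARD('n)) V E"
    using unit_ball_graph_control_function by simp
qed

end
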